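(* Let $T$ be large, $x \ge 1$, and $(c(n))_{n \le x}$ any complex numbers. Let $\mathcal{P}$ be a finite set of primes, let $\mathcal{Q}$ be a non-empty set whose elements are some elements of $\mathcal{P}$ and/or squares of elements of $\mathcal{P}$, and let $U := \max\{q \in \mathcal{Q}\}$. Let $Q(t) := \sum_{q \in \mathcal{Q}} \frac{a(q)}{q^{1/2+it}}$ with arbitrary complex $a(q)$. Define $\tilde{d}(n) := \sum_{d \mid n} \mathbf{1}_{p \mid d \Rightarrow p \in \mathcal{P}}$ (the number of divisors of $n$ all of whose prime factors lie in $\mathcal{P}$), and let $v_q = 1$ if $q$ is a prime and $v_q = 6$ if $q$ is the square of a prime. Then: (i) for every natural number $k$ with $x U^k < T$, $$ \frac{1}{T} \int_{T}^{2T} \Big|\sum_{n \le x} c(n) n^{-it} \Big|^{2} |Q(t)|^{2k} dt \ll \Big(\sum_{n \le x} \tilde{d}(n) |c(n)|^2 \Big) \cdot k! \cdot \Big( 2 \sum_{q \in \mathcal{Q}} \frac{v_q |a(q)|^2}{q} \Big)^{k} ; $$ (ii) for every natural number $k$ with $U^{k} < T$, $$ \frac{1}{T} \int_{T}^{2T} |Q(t)|^{2k} dt \ll k! \Big( \sum_{q \in \mathcal{Q}} \frac{v_q |a(q)|^2}{q} \Big)^{k} . $$ The implied constants are absolute. *)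

theory Defs
  imports "HOL-Analysis.Analysis" "HOL-Computational_Algebra.Primes"
begin

definition dtilde :: "nat set \<Rightarrow> nat \<Rightarrow> nat" where
  "dtilde P n = card {d. d dvd n \<and> (\<forall>p. prime p \<and> p dvd d \<longrightarrow> p \<in> P)}"

definition vq :: "nat \<Rightarrow> real" where
  "vq q = (if prime q then 1 else 6)"

definition Qpoly :: "nat set \<Rightarrow> (nat \<Rightarrow> complex) \<Rightarrow> real \<Rightarrow> complex" where
  "Qpoly Qs a t = (\<Sum>q\<in>Qs. a q / (of_nat q powr (1/2 + \<i> * of_real t)))"

definition Dpoly :: "real \<Rightarrow> (nat \<Rightarrow> complex) \<Rightarrow> real \<Rightarrow> complex" where
  "Dpoly x c t = (\<Sum>n\<in>{n. 1 \<le> n \<and> real n \<le> x}. c n * of_nat n powr (- \<i> * of_real t))"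

end

theory Submission
  imports Defs
begin

text \<open>
  The engine is a mean value theorem: if \<open>F(t) = \<Sum>\<^sub>m b\<^sub>m m^(-it)\<close> has positive frequencies
  \<open>m \<le> N \<le> T\<close>, then \<open>\<integral>\<^sub>T\<^sup>2\<^sup>T |F(t)|\<^sup>2 dt \<le> 34 T \<Sum>\<^sub>m |b\<^sub>m|\<^sup>2\<close>. Integrating over a slightly longer
  interval and using a second antiderivative of \<open>|F|\<^sup>2\<close>, each off-diagonal term gains a factor
  \<open>(ln m - ln n)^(-2) \<le> N\<^sup>2 / (m - n)\<^sup>2\<close>, and \<open>\<Sum> 1/j\<^sup>2 \<le> 2\<close> finishes the estimate.

  Expanding \<open>Q(t)^k\<close> over \<open>k\<close>-tuples of elements of \<open>Q\<close> makes \<open>D(t) Q(t)^k\<close> a Dirichlet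
  polynomial with frequencies \<open>n q\<^sub>1 \<cdots> q\<^sub>k \<le> x U^k < T\<close>, in which a product \<open>l\<close> is produced by
  \<open>R\<^sub>k(l)\<close> tuples. Splitting the merged coefficients again by Cauchy--Schwarz with weights
  \<open>1 / R\<^sub>k(l)\<close> leaves two arithmetic inputs: \<open>R\<^sub>k(l) \<le> k! 2^(\<Omega>(l) - k)\<close>, proved by counting
  the entries \<open>p\<close> and \<open>p\<^sup>2\<close> of all tuples against the multiplicity of a prime \<open>p\<close> in \<open>l\<close>;
  and the products \<open>l\<close> attached to one frequency \<open>m\<close> are divisors of \<open>m\<close> counted by
  \<open>dtilde P m\<close>. The local factors \<open>2^(\<Omega>(q) - 1)\<close> and \<open>dtilde P q\<close> are then absorbed into \<open>v\<^sub>q\<close>.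
\<close>

section \<open>A mean value theorem for Dirichlet polynomials\<close>

lemma sum_inverse_squares_atLeastAtMost_le:
  "K \<ge> 1 \<Longrightarrow> (\<Sum>j=1..K. 1 / (real j)^2) \<le> 2 - 1 / real K"
proof (induction K rule: dec_induct)
  case base
  then show ?case by simp
next
  case (step K)
  have K: "real K \<ge> 1" using step by simp
  have "1 / (real K + 1)^2 \<le> 1 / (real K * (real K + 1))"
    using K by (intro divide_left_mono) (auto simp: power2_eq_square)
  also have "\<dots> = 1 / real K - 1 / (real K + 1)" using K by (simp add: field_simps)
  finally show ?case using step.IH by (simp add: add.commute)
qed

lemma sum_inverse_squares_le:
  assumes "finite J" "0 \<notin> J"
  shows "(\<Sum>j\<in>J. 1 / (real j)^2) \<le> 2"
proof (cases "J = {}")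
  case False
  have sub: "J \<subseteq> {1..Max J}"
    using assms by (auto simp: Suc_le_eq intro!: Max_ge) (metis gr0I)
  then have "(\<Sum>j\<in>J. 1 / (real j)^2) \<le> (\<Sum>j=1..Max J. 1 / (real j)^2)"
    by (intro sum_mono2) auto
  also have "\<dots> \<le> 2 - 1 / real (Max J)"
    using sub False by (intro sum_inverse_squares_atLeastAtMost_le) auto
  also have "\<dots> \<le> 2" by simp
  finally show ?thesis .
qed simp

lemma sum_inverse_squares_of_distances_le:
  assumes "finite S"
  shows "(\<Sum>n\<in>S-{m}. 1 / (real m - real n)^2) \<le> 4"
proof -
  have below: "(\<Sum>n\<in>{n\<in>S. n < m}. 1 / (real m - real n)^2) \<le> 2"
  proof -
    have "(\<Sum>n\<in>{n\<in>S. n < m}. 1 / (real m - real n)^2) = (\<Sum>j\<in>(\<lambda>n. m - n) ` {n\<in>S. n < m}. 1 / (real j)^2)"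
      by (subst sum.reindex) (auto simp: inj_on_def of_nat_diff intro!: sum.cong)
    also have "\<dots> \<le> 2" by (rule sum_inverse_squares_le) (use assms in auto)
    finally show ?thesis .
  qed
  have above: "(\<Sum>n\<in>{n\<in>S. m < n}. 1 / (real m - real n)^2) \<le> 2"
  proof -
    have "(\<Sum>n\<in>{n\<in>S. m < n}. 1 / (real m - real n)^2) = (\<Sum>j\<in>(\<lambda>n. n - m) ` {n\<in>S. m < n}. 1 / (real j)^2)"
      by (subst sum.reindex) (auto simp: inj_on_def of_nat_diff power2_commute intro!: sum.cong)
    also have "\<dots> \<le> 2" by (rule sum_inverse_squares_le) (use assms in auto)
    finally show ?thesis .
  qed
  have split: "S - {m} = {n\<in>S. n < m} \<union> {n\<in>S. m < n}" by auto
  have "(\<Sum>n\<in>S-{m}. 1 / (real m - real n)^2)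
      = (\<Sum>n\<in>{n\<in>S. n < m}. 1 / (real m - real n)^2) + (\<Sum>n\<in>{n\<in>S. m < n}. 1 / (real m - real n)^2)"
    unfolding split by (rule sum.union_disjoint) (use assms in auto)
  with below above show ?thesis by simp
qed

lemma inverse_ln_diff_sq_le:
  assumes "0 < n" "0 < m" "n \<noteq> m" "real m \<le> N" "real n \<le> N"
  shows "1 / (ln (real m) - ln (real n))^2 \<le> N^2 / (real m - real n)^2"
proof -
  have ordered: "1 / (ln (real m) - ln (real n))^2 \<le> N^2 / (real m - real n)^2"
    if "0 < n" "n < m" "real m \<le> N" for m n :: nat
  proof -
    have N: "N > 0" using that by linarith
    have "ln (real n / real m) \<le> real n / real m - 1" by (rule ln_le_minus_one) (use that in auto)
    then have "(real m - real n) / real m \<le> ln (real m) - ln (real n)"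
      using that by (simp add: ln_div field_simps)
    moreover have "(real m - real n) / N \<le> (real m - real n) / real m"
      using that by (intro divide_left_mono) auto
    ultimately have le: "(real m - real n) / N \<le> ln (real m) - ln (real n)" by linarith
    have pos: "0 < (real m - real n) / N" using that N by simp
    have "1 / (ln (real m) - ln (real n))^2 \<le> 1 / ((real m - real n) / N)^2"
      using le pos by (intro divide_left_mono power_mono mult_pos_pos) auto
    then show ?thesis by (simp add: power_divide)
  qed
  show ?thesis
  proof (cases "n < m")
    case True then show ?thesis using ordered assms by blast
  next
    case False
    then have "m < n" using assms by auto
    from ordered[OF assms(2) this assms(5)] show ?thesis by (simp add: power2_commute)
  qed
qed

lemma sum_offdiagonal_swap:
  assumes "finite S"
  shows "(\<Sum>m\<in>S. \<Sum>n\<in>S-{m}. f m n) = (\<Sum>n\<in>S. \<Sum>m\<in>S-{n}. f m n)"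
proof -
  have "(\<Sum>m\<in>S. \<Sum>n\<in>S-{m}. f m n) = (\<Sum>m\<in>S. \<Sum>n | n \<in> S \<and> m \<noteq> n. f m n)"
    by (intro sum.cong) auto
  also have "\<dots> = (\<Sum>n\<in>S. \<Sum>m | m \<in> S \<and> m \<noteq> n. f m n)"
    by (rule sum.swap_restrict) (use assms in auto)
  also have "\<dots> = (\<Sum>n\<in>S. \<Sum>m\<in>S-{n}. f m n)"
    by (intro sum.cong) auto
  finally show ?thesis .
qed

text \<open>A crude substitute for the Montgomery--Vaughan form of Hilbert's inequality, where
  the spacing of the frequencies \<open>ln m\<close> is only used through \<open>|ln m - ln n| \<ge> |m - n| / N\<close>.\<close>
lemma offdiagonal_sum_inverse_ln_diff_sq_le:
  fixes c :: "nat \<Rightarrow> real"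
  assumes S: "finite S" "0 \<notin> S" and bound: "\<forall>m\<in>S. real m \<le> N"
  shows "(\<Sum>m\<in>S. \<Sum>n\<in>S-{m}. \<bar>c m\<bar> * \<bar>c n\<bar> / (ln (real m) - ln (real n))^2)
         \<le> 4 * N^2 * (\<Sum>m\<in>S. (c m)^2)"
proof -
  define w where "w m n = 1 / (ln (real m) - ln (real n))^2" for m n :: nat
  have w_sym: "w m n = w n m" for m n unfolding w_def by (simp add: power2_commute)
  have "(\<Sum>m\<in>S. \<Sum>n\<in>S-{m}. \<bar>c m\<bar> * \<bar>c n\<bar> / (ln (real m) - ln (real n))^2)
     \<le> (\<Sum>m\<in>S. \<Sum>n\<in>S-{m}. (c m)^2/2 * w m n + (c n)^2/2 * w m n)"
  proof (intro sum_mono)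
    fix m n
    have "\<bar>c m\<bar> * \<bar>c n\<bar> \<le> (c m)^2/2 + (c n)^2/2"
      using sum_squares_bound[of "\<bar>c m\<bar>" "\<bar>c n\<bar>"] by (simp add: power2_abs)
    then have "\<bar>c m\<bar> * \<bar>c n\<bar> * w m n \<le> ((c m)^2/2 + (c n)^2/2) * w m n"
      by (rule mult_right_mono) (simp add: w_def)
    then show "\<bar>c m\<bar> * \<bar>c n\<bar> / (ln (real m) - ln (real n))^2 \<le> (c m)^2/2 * w m n + (c n)^2/2 * w m n"
      unfolding w_def by (simp add: algebra_simps)
  qed
  also have "\<dots> = (\<Sum>m\<in>S. \<Sum>n\<in>S-{m}. (c m)^2/2 * w m n) + (\<Sum>n\<in>S. \<Sum>m\<in>S-{n}. (c n)^2/2 * w n m)"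
    using sum_offdiagonal_swap[OF S(1), of "\<lambda>m n. (c n)^2/2 * w m n"]
    by (simp add: sum.distrib w_sym)
  also have "\<dots> = (\<Sum>m\<in>S. (c m)^2 * (\<Sum>n\<in>S-{m}. w m n))"
    by (simp add: sum_distrib_left sum.distrib[symmetric] mult.commute)
  also have "\<dots> \<le> (\<Sum>m\<in>S. (c m)^2 * (4 * N^2))"
  proof (intro sum_mono mult_left_mono)
    fix m assume m: "m \<in> S"
    have "(\<Sum>n\<in>S-{m}. w m n) \<le> (\<Sum>n\<in>S-{m}. N^2 * (1 / (real m - real n)^2))"
    proof (intro sum_mono)
      fix n assume n: "n \<in> S - {m}"
      have "w m n \<le> N^2 / (real m - real n)^2"
        unfolding w_def by (rule inverse_ln_diff_sq_le) (use m n S bound in \<open>auto intro: gr0I\<close>)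
      then show "w m n \<le> N^2 * (1 / (real m - real n)^2)" by simp
    qed
    also have "\<dots> \<le> N^2 * 4"
      unfolding sum_distrib_left[symmetric]
      by (rule mult_left_mono) (use sum_inverse_squares_of_distances_le[OF S(1), of m] in auto)
    finally show "(\<Sum>n\<in>S-{m}. w m n) \<le> 4 * N^2" by simp
  qed simp
  also have "\<dots> = 4 * N^2 * (\<Sum>m\<in>S. (c m)^2)" by (simp add: sum_distrib_left mult_ac)
  finally show ?thesis .
qed

lemma norm_sum_cis_squared:
  fixes S :: "nat set" and b :: "nat \<Rightarrow> complex"
  assumes "finite S"
  shows "(cmod (\<Sum>m\<in>S. b m * cis (-(t * ln (real m)))))^2 =
     (\<Sum>m\<in>S. (cmod (b m))^2) + (\<Sum>m\<in>S. \<Sum>n\<in>S-{m}.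
        Re (b m * cnj (b n)) * cos (t * (ln (real m) - ln (real n)))
        + Im (b m * cnj (b n)) * sin (t * (ln (real m) - ln (real n))))"
proof -
  let ?F = "\<Sum>m\<in>S. b m * cis (-(t * ln (real m)))"
  let ?W = "\<lambda>m n. Re (b m * cnj (b n)) * cos (t * (ln (real m) - ln (real n)))
        + Im (b m * cnj (b n)) * sin (t * (ln (real m) - ln (real n)))"
  have "complex_of_real ((cmod ?F)^2) = ?F * cnj ?F" by (rule complex_norm_square)
  also have "\<dots> = (\<Sum>m\<in>S. \<Sum>n\<in>S. b m * cnj (b n) * cis (- (t * (ln (real m) - ln (real n)))))"
    by (simp add: sum_distrib_left sum_distrib_right cis_cnj cis_mult algebra_simps) (rule sum.swap)
  finally have "(cmod ?F)^2 = Re (\<Sum>m\<in>S. \<Sum>n\<in>S. b m * cnj (b n) * cis (- (t * (ln (real m) - ln (real n)))))"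
    by (metis Re_complex_of_real)
  also have "\<dots> = (\<Sum>m\<in>S. \<Sum>n\<in>S. ?W m n)"
    by (simp add: Re_sum)
  also have "\<dots> = (\<Sum>m\<in>S. (cmod (b m))^2 + (\<Sum>n\<in>S-{m}. ?W m n))"
  proof (rule sum.cong[OF refl])
    fix m assume "m \<in> S"
    moreover have "Re (b m * cnj (b m)) = (cmod (b m))^2"
      by (metis Re_complex_of_real complex_norm_square)
    ultimately show "(\<Sum>n\<in>S. ?W m n) = (cmod (b m))^2 + (\<Sum>n\<in>S-{m}. ?W m n)"
      using assms by (simp add: sum.remove)
  qed
  finally show ?thesis by (simp add: sum.distrib)
qed

text \<open>The integral over \<open>[T, 2T]\<close> is bounded by that over \<open>[3T/2 - z, 3T/2 + z]\<close>, where
  \<open>z \<in> (T/2, T)\<close> is the mean value point of \<open>z \<mapsto> G (3T/2 + z) + G (3T/2 - z)\<close>; this trades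
  \<open>h\<close> for values of its second antiderivative, in which oscillating terms \<open>cos (\<xi> t)\<close> gain a
  factor \<open>1/\<xi>\<^sup>2\<close>.\<close>
lemma integral_le_second_antiderivative:
  fixes h g G :: "real \<Rightarrow> real"
  assumes T: "0 < T" and h_nonneg: "\<And>t. 0 \<le> h t"
    and g: "\<And>t. (g has_real_derivative h t) (at t)"
    and G: "\<And>t. (G has_real_derivative g t) (at t)"
  shows "integral {T..2*T} h \<le> 2 / T * (G (5/2*T) + G (T/2) - G (2*T) - G T)"
proof -
  define t0 where "t0 = 3/2 * T"
  define \<Psi> where "\<Psi> s = G (t0 + s) + G (t0 - s)" for s
  have h_integral: "(h has_integral (g c - g a)) {a..c}" if "a \<le> c" for a c
    by (rule fundamental_theorem_of_calculus[OF that])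
       (metis g has_field_derivative_at_within has_real_derivative_iff_has_vector_derivative)
  have "(\<Psi> has_real_derivative (g (t0 + s) - g (t0 - s))) (at s)" for s
  proof -
    have "((\<lambda>s. G (t0 + s)) has_real_derivative g (t0 + s) * 1) (at s)"
         "((\<lambda>s. G (t0 - s)) has_real_derivative g (t0 - s) * (-1)) (at s)"
      by (rule DERIV_chain2[OF G]; auto intro!: derivative_eq_intros)+
    from DERIV_add[OF this] show ?thesis unfolding \<Psi>_def by simp
  qed
  then obtain z where z: "T/2 < z" "z < T"
    and z_eq: "\<Psi> T - \<Psi> (T/2) = (T - T/2) * (g (t0 + z) - g (t0 - z))"
    using MVT2[of "T/2" T \<Psi> "\<lambda>s. g (t0 + s) - g (t0 - s)"] T by auto
  have "integral {T..2*T} h \<le> integral {t0 - z..t0 + z} h"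
  proof (rule integral_subset_le)
    show "{T..2*T} \<subseteq> {t0 - z..t0 + z}" using z unfolding t0_def by auto
    show "h integrable_on {T..2*T}" "h integrable_on {t0 - z..t0 + z}"
      using h_integral[of T "2*T"] h_integral[of "t0 - z" "t0 + z"] z T
      by (auto simp: t0_def intro: has_integral_integrable)
  qed (use h_nonneg in auto)
  also have "\<dots> = g (t0 + z) - g (t0 - z)"
    using h_integral[of "t0 - z" "t0 + z"] z T by (auto intro: integral_unique)
  also have "\<dots> = 2 / T * (\<Psi> T - \<Psi> (T/2))" using z_eq T by (simp add: field_simps)
  also have "\<Psi> T - \<Psi> (T/2) = G (5/2*T) + G (T/2) - G (2*T) - G T"
    unfolding \<Psi>_def t0_def by (simp add: algebra_simps)
  finally show ?thesis .
qed

lemma abs_Re_cos_plus_Im_sin_le: "\<bar>Re z * cos \<theta> + Im z * sin \<theta>\<bar> \<le> cmod z"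
proof -
  have "\<bar>Re z * cos \<theta> + Im z * sin \<theta>\<bar> = \<bar>Re (z * cis (- \<theta>))\<bar>" by simp
  also have "\<dots> \<le> cmod z" using abs_Re_le_cmod[of "z * cis (- \<theta>)"] by (simp add: norm_mult)
  finally show ?thesis .
qed

lemma has_real_derivative_sin_cos_div:
  "x \<noteq> 0 \<Longrightarrow> ((\<lambda>t. (u * sin (t * x) - v * cos (t * x)) / x)
     has_real_derivative (u * cos (t * x) + v * sin (t * x))) (at t)"
  by (auto intro!: derivative_eq_intros simp: field_simps)

lemma has_real_derivative_cos_sin_div_sq:
  "x \<noteq> 0 \<Longrightarrow> ((\<lambda>t. (u * cos (t * x) + v * sin (t * x)) / x^2)
     has_real_derivative - ((u * sin (t * x) - v * cos (t * x)) / x)) (at t)"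
  by (auto intro!: derivative_eq_intros simp: field_simps power2_eq_square)

theorem integral_norm_dirichlet_polynomial_squared_le:
  fixes S :: "nat set" and b :: "nat \<Rightarrow> complex"
  assumes S: "finite S" "0 \<notin> S" and bound: "\<forall>m\<in>S. real m \<le> N"
    and N: "0 \<le> N" "N \<le> T" and T: "0 < T"
  shows "integral {T..2*T} (\<lambda>t. (cmod (\<Sum>m\<in>S. b m * cis (-(t * ln (real m)))))^2)
     \<le> 34 * T * (\<Sum>m\<in>S. (cmod (b m))^2)"
proof -
  define \<xi> where "\<xi> m n = ln (real m) - ln (real n)" for m n :: nat
  define u where "u m n = Re (b m * cnj (b n))" for m n
  define v where "v m n = Im (b m * cnj (b n))" for m n
  define W where "W m n t = u m n * cos (t * \<xi> m n) + v m n * sin (t * \<xi> m n)" for m n t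
  define B where "B = (\<Sum>m\<in>S. (cmod (b m))^2)"
  define h where "h t = B + (\<Sum>m\<in>S. \<Sum>n\<in>S-{m}. W m n t)" for t
  define g where "g t = t * B + (\<Sum>m\<in>S. \<Sum>n\<in>S-{m}.
      (u m n * sin (t * \<xi> m n) - v m n * cos (t * \<xi> m n)) / \<xi> m n)" for t
  define G where "G t = t^2/2 * B - (\<Sum>m\<in>S. \<Sum>n\<in>S-{m}. W m n t / (\<xi> m n)^2)" for t
  have \<xi>_nonzero: "\<xi> m n \<noteq> 0" if "m \<in> S" "n \<in> S-{m}" for m n
  proof
    assume "\<xi> m n = 0"
    moreover have "0 < m" "0 < n" using that S(2) by (auto intro: gr0I)
    ultimately show False using that unfolding \<xi>_def by simp
  qed
  have h_eq: "(cmod (\<Sum>m\<in>S. b m * cis (-(t * ln (real m)))))^2 = h t" for t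
    using norm_sum_cis_squared[OF S(1)] unfolding h_def W_def \<xi>_def B_def u_def v_def by simp
  have g_deriv: "(g has_real_derivative h t) (at t)" for t
    unfolding g_def h_def W_def
    by (intro DERIV_add DERIV_sum has_real_derivative_sin_cos_div \<xi>_nonzero)
       (auto intro!: derivative_eq_intros)
  have "((\<lambda>t. \<Sum>m\<in>S. \<Sum>n\<in>S-{m}. W m n t / (\<xi> m n)^2) has_real_derivative
      (\<Sum>m\<in>S. \<Sum>n\<in>S-{m}. - ((u m n * sin (t * \<xi> m n) - v m n * cos (t * \<xi> m n)) / \<xi> m n))) (at t)" for t
    unfolding W_def by (intro DERIV_sum has_real_derivative_cos_sin_div_sq \<xi>_nonzero) auto
  then have G_deriv: "(G has_real_derivative g t) (at t)" for t
    unfolding G_def g_def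
    by (rule DERIV_cong[OF DERIV_diff[rotated]]) (auto intro!: derivative_eq_intros simp: sum_negf)
  have W_bound: "\<bar>W m n t\<bar> \<le> cmod (b m) * cmod (b n)" for m n t
    using abs_Re_cos_plus_Im_sin_le[of "b m * cnj (b n)"] unfolding W_def u_def v_def
    by (simp add: norm_mult)
  have "G (5/2*T) + G (T/2) - G (2*T) - G T = 3/4 * T^2 * B + (\<Sum>m\<in>S. \<Sum>n\<in>S-{m}.
      (W m n (2*T) + W m n T - W m n (5/2*T) - W m n (T/2)) / (\<xi> m n)^2)"
    unfolding G_def add_divide_distrib diff_divide_distrib sum.distrib sum_subtractf
    by (simp add: algebra_simps power2_eq_square)
  also have "\<dots> \<le> 3/4 * T^2 * B + 4 * (\<Sum>m\<in>S. \<Sum>n\<in>S-{m}.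
      \<bar>cmod (b m)\<bar> * \<bar>cmod (b n)\<bar> / (ln (real m) - ln (real n))^2)"
    unfolding sum_distrib_left \<xi>_def
  proof (intro add_left_mono sum_mono)
    fix m n
    have "W m n (2*T) + W m n T - W m n (5/2*T) - W m n (T/2) \<le> 4 * (cmod (b m) * cmod (b n))"
      using W_bound[of m n "2*T"] W_bound[of m n T] W_bound[of m n "5/2*T"] W_bound[of m n "T/2"]
      by linarith
    then show "(W m n (2*T) + W m n T - W m n (5/2*T) - W m n (T/2)) / (ln (real m) - ln (real n))^2
        \<le> 4 * (\<bar>cmod (b m)\<bar> * \<bar>cmod (b n)\<bar> / (ln (real m) - ln (real n))^2)"
      by (simp add: divide_right_mono)
  qed
  also have "\<dots> \<le> 3/4 * T^2 * B + 4 * (4 * N^2 * B)"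
    using offdiagonal_sum_inverse_ln_diff_sq_le[OF S bound, of "\<lambda>m. cmod (b m)"]
    unfolding B_def by simp
  also have "\<dots> \<le> 3/4 * T^2 * B + 16 * T^2 * B"
    using N by (simp add: B_def sum_nonneg mult_right_mono power_mono)
  finally have G_bound: "G (5/2*T) + G (T/2) - G (2*T) - G T \<le> 67/4 * T^2 * B"
    by (simp add: mult_ac)
  have "integral {T..2*T} (\<lambda>t. (cmod (\<Sum>m\<in>S. b m * cis (-(t * ln (real m)))))^2)
      \<le> 2 / T * (G (5/2*T) + G (T/2) - G (2*T) - G T)"
    unfolding h_eq
    by (rule integral_le_second_antiderivative[OF T _ g_deriv G_deriv]) (metis h_eq zero_le_power2)
  also have "\<dots> \<le> 2 / T * (67/4 * T^2 * B)"
    using G_bound T by (intro mult_left_mono) auto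
  also have "\<dots> \<le> 34 * T * B"
    using T by (simp add: B_def power2_eq_square sum_nonneg mult_right_mono)
  finally show ?thesis unfolding B_def .
qed

lemma norm_sum_squared_le_weighted:
  fixes z :: "'i \<Rightarrow> 'a::real_normed_vector" and w :: "'i \<Rightarrow> real"
  assumes "\<forall>i\<in>A. 0 < w i"
  shows "(norm (\<Sum>i\<in>A. z i))^2 \<le> (\<Sum>i\<in>A. w i) * (\<Sum>i\<in>A. (norm (z i))^2 / w i)"
proof -
  have "(norm (\<Sum>i\<in>A. z i))^2 \<le> (\<Sum>i\<in>A. norm (z i))^2"
    by (intro power_mono norm_sum) simp
  also have "(\<Sum>i\<in>A. norm (z i)) = (\<Sum>i\<in>A. sqrt (w i) * (norm (z i) / sqrt (w i)))"
    by (rule sum.cong) (use assms in auto)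
  also have "(\<dots>)^2 \<le> (\<Sum>i\<in>A. (sqrt (w i))^2) * (\<Sum>i\<in>A. (norm (z i) / sqrt (w i))^2)"
    by (rule Cauchy_Schwarz_ineq_sum)
  also have "\<dots> = (\<Sum>i\<in>A. w i) * (\<Sum>i\<in>A. (norm (z i))^2 / w i)"
    using assms by (intro arg_cong2[where f="(*)"] sum.cong) (auto simp: power_divide)
  finally show ?thesis .
qed

text \<open>Terms with equal frequencies are merged, and each merged coefficient is split again by
  Cauchy--Schwarz with the weights \<open>w\<close>.\<close>
lemma integral_norm_dirichlet_polynomial_family_squared_le:
  fixes I :: "'i set" and f :: "'i \<Rightarrow> nat" and z :: "'i \<Rightarrow> complex" and w :: "'i \<Rightarrow> real"
  assumes I: "finite I" and f: "\<forall>i\<in>I. 0 < f i \<and> real (f i) \<le> N"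
    and N: "0 \<le> N" "N \<le> T" and T: "0 < T" and w: "\<forall>i\<in>I. 0 < w i"
  shows "integral {T..2*T} (\<lambda>t. (cmod (\<Sum>i\<in>I. z i * cis (-(t * ln (real (f i))))))^2)
    \<le> 34 * T * (\<Sum>i\<in>I. (cmod (z i))^2 / w i * (\<Sum>j\<in>{j\<in>I. f j = f i}. w j))"
proof -
  define b where "b m = (\<Sum>i\<in>{i\<in>I. f i = m}. z i)" for m
  have merge: "(\<Sum>i\<in>I. z i * cis (-(t * ln (real (f i))))) = (\<Sum>m\<in>f ` I. b m * cis (-(t * ln (real m))))" for t
    unfolding b_def sum_distrib_right by (subst sum.image_gen[OF I, of _ f]) (intro sum.cong; auto)
  have fI: "finite (f ` I)" "0 \<notin> f ` I" "\<forall>m\<in>f ` I. real m \<le> N" using I f by auto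
  have "integral {T..2*T} (\<lambda>t. (cmod (\<Sum>i\<in>I. z i * cis (-(t * ln (real (f i))))))^2)
      \<le> 34 * T * (\<Sum>m\<in>f ` I. (cmod (b m))^2)"
    unfolding merge by (rule integral_norm_dirichlet_polynomial_squared_le[OF fI N T])
  also have "(\<Sum>m\<in>f ` I. (cmod (b m))^2)
      \<le> (\<Sum>m\<in>f ` I. \<Sum>i\<in>{i\<in>I. f i = m}. (cmod (z i))^2 / w i * (\<Sum>j\<in>{j\<in>I. f j = m}. w j))"
  proof (rule sum_mono)
    fix m
    have "(cmod (b m))^2 \<le> (\<Sum>j\<in>{j\<in>I. f j = m}. w j) * (\<Sum>i\<in>{i\<in>I. f i = m}. (cmod (z i))^2 / w i)"
      unfolding b_def by (rule norm_sum_squared_le_weighted) (use w in auto)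
    also have "\<dots> = (\<Sum>i\<in>{i\<in>I. f i = m}. (cmod (z i))^2 / w i) * (\<Sum>j\<in>{j\<in>I. f j = m}. w j)"
      by (rule mult.commute)
    finally show "(cmod (b m))^2
        \<le> (\<Sum>i\<in>{i\<in>I. f i = m}. (cmod (z i))^2 / w i * (\<Sum>j\<in>{j\<in>I. f j = m}. w j))"
      by (simp only: sum_distrib_right)
  qed
  also have "\<dots> = (\<Sum>i\<in>I. (cmod (z i))^2 / w i * (\<Sum>j\<in>{j\<in>I. f j = f i}. w j))"
    by (subst sum.image_gen[OF I, of _ f]) (intro sum.cong; auto)
  finally show ?thesis using T by (simp add: mult_left_mono)
qed

section \<open>Products of primes and squares of primes\<close>

definition prime_or_prime_square :: "nat \<Rightarrow> bool" where
  "prime_or_prime_square q \<longleftrightarrow> prime q \<or> (\<exists>p. prime p \<and> q = p^2)"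

definition bigOmega :: "nat \<Rightarrow> nat" where
  "bigOmega n = size (prime_factorization n)"

definition tuples :: "'a set \<Rightarrow> nat \<Rightarrow> 'a list set" where
  "tuples A k = {xs. set xs \<subseteq> A \<and> length xs = k}"

definition prod_count :: "nat set \<Rightarrow> nat \<Rightarrow> nat \<Rightarrow> nat" where
  "prod_count Q k l = card {xs \<in> tuples Q k. prod_list xs = l}"

lemma bigOmega_mult: "a \<noteq> 0 \<Longrightarrow> b \<noteq> 0 \<Longrightarrow> bigOmega (a * b) = bigOmega a + bigOmega b"
  unfolding bigOmega_def by (simp add: prime_factorization_mult)

lemma bigOmega_prime_power: "prime p \<Longrightarrow> bigOmega (p ^ k) = k"
  unfolding bigOmega_def by (simp add: prime_factorization_prime_power)

lemma bigOmega_prime: "prime p \<Longrightarrow> bigOmega p = 1"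
  using bigOmega_prime_power[of p 1] by simp

lemma prod_list_pos: "(\<And>q. q \<in> set xs \<Longrightarrow> 0 < q) \<Longrightarrow> 0 < prod_list (xs :: 'a::linordered_semidom list)"
  by (induction xs) auto

lemma bigOmega_prod_list:
  "(\<And>q. q \<in> set xs \<Longrightarrow> 0 < q) \<Longrightarrow> bigOmega (prod_list xs) = sum_list (map bigOmega xs)"
proof (induction xs)
  case (Cons a xs)
  then show ?case using prod_list_pos[of xs] by (simp add: bigOmega_mult)
qed (simp add: bigOmega_def)

lemma bigOmega_div:
  assumes "d dvd l" "l \<noteq> 0"
  shows "bigOmega l = bigOmega (l div d) + bigOmega d"
  using assms bigOmega_mult[of "l div d" d] by (metis dvd_div_mult_self mult_eq_0_iff)

lemma prime_or_prime_squareE: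
  assumes "prime_or_prime_square q"
  obtains p where "prime p" "q = p \<or> q = p^2"
  using assms unfolding prime_or_prime_square_def by auto

lemma prime_or_prime_square_pos: "prime_or_prime_square q \<Longrightarrow> 0 < q"
  by (elim prime_or_prime_squareE) (auto simp: prime_gt_0_nat)

lemma bigOmega_prime_or_prime_square:
  "prime_or_prime_square q \<Longrightarrow> bigOmega q = (if prime q then 1 else 2)"
  by (elim prime_or_prime_squareE) (auto simp: bigOmega_prime bigOmega_prime_power prime_power_iff)

lemma multiplicity_prime_or_prime_square:
  assumes "prime_or_prime_square q" "prime p"
  shows "multiplicity p q = (if q = p then 1 else if q = p^2 then 2 else 0)"
proof -
  obtain r where r: "prime r" "q = r \<or> q = r^2"
    using assms(1) by (elim prime_or_prime_squareE)
  have "p < p^2" using prime_gt_1_nat[OF assms(2)] by (simp add: power2_eq_square)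
  moreover have "p \<noteq> r^2" "r \<noteq> p^2"
    using assms(2) r(1) by (auto simp: prime_power_iff)
  moreover have "r = p" if "r^2 = p^2" using that by (simp add: power2_eq_iff_nonneg)
  ultimately show ?thesis
    using r assms(2) multiplicity_distinct_prime_power[of p r 1]
    by (cases "r = p") (auto simp: multiplicity_prime_power multiplicity_distinct_prime_power)
qed

lemma finite_tuples: "finite A \<Longrightarrow> finite (tuples A k)"
  unfolding tuples_def by (rule finite_lists_length_eq)

lemma tuples_0: "tuples A 0 = {[]}"
  unfolding tuples_def by auto

lemma tuples_Suc: "tuples A (Suc k) = (\<lambda>(a, xs). a # xs) ` (A \<times> tuples A k)"
  unfolding tuples_def by (auto simp: length_Suc_conv image_iff)

lemma power_sum_eq_sum_tuples:
  fixes g :: "'a \<Rightarrow> 'b::comm_semiring_1"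
  assumes "finite A"
  shows "(\<Sum>a\<in>A. g a) ^ k = (\<Sum>xs\<in>tuples A k. prod_list (map g xs))"
proof (induction k)
  case (Suc k)
  have "inj_on (\<lambda>(a, xs). a # xs) (A \<times> tuples A k)" by (auto simp: inj_on_def)
  then have "(\<Sum>xs\<in>tuples A (Suc k). prod_list (map g xs)) = (\<Sum>(a, xs)\<in>A \<times> tuples A k. g a * prod_list (map g xs))"
    unfolding tuples_Suc by (subst sum.reindex) (simp_all add: case_prod_unfold)
  also have "\<dots> = (\<Sum>a\<in>A. g a) * (\<Sum>xs\<in>tuples A k. prod_list (map g xs))"
    by (simp add: sum_product sum.cartesian_product)
  finally show ?case using Suc by simp
qed (simp add: tuples_0)

lemma prod_list_le_power: "(\<And>q. q \<in> set xs \<Longrightarrow> q \<le> U) \<Longrightarrow> prod_list xs \<le> U ^ length (xs :: nat list)"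
  by (induction xs) (auto intro: mult_le_mono)

lemma multiplicity_prod_list:
  assumes "prime (p::nat)" "\<And>q. q \<in> set xs \<Longrightarrow> 0 < q"
  shows "multiplicity p (prod_list xs) = (\<Sum>i<length xs. multiplicity p (xs ! i))"
  using assms(2)
proof (induction xs)
  case (Cons a xs)
  then have "multiplicity p (prod_list (a # xs)) = multiplicity p a + multiplicity p (prod_list xs)"
    using assms(1) prod_list_pos[of xs] by (simp add: prime_elem_multiplicity_mult_distrib)
  then show ?case using Cons by (simp del: sum.lessThan_Suc add: sum.lessThan_Suc_shift)
qed simp

lemma norm_prod_list_map:
  fixes f :: "'a \<Rightarrow> 'b::{real_normed_div_algebra, comm_monoid_mult}"
  shows "norm (prod_list (map f xs)) = prod_list (map (\<lambda>x. norm (f x)) xs)"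
  by (induction xs) (auto simp: norm_mult)

lemma prod_list_map_mult:
  fixes f g :: "'a \<Rightarrow> 'b::comm_monoid_mult"
  shows "prod_list (map f xs) * prod_list (map g xs) = prod_list (map (\<lambda>x. f x * g x) xs)"
  by (induction xs) (auto simp: ac_simps)

lemma of_nat_prod_list_map: "of_nat (prod_list (map f xs)) = prod_list (map (\<lambda>x. of_nat (f x)) xs)"
  by (induction xs) auto

lemma prod_list_map_mono:
  fixes f g :: "'a \<Rightarrow> 'b::linordered_semidom"
  assumes "\<And>x. x \<in> set xs \<Longrightarrow> 0 \<le> f x \<and> f x \<le> g x"
  shows "prod_list (map f xs) \<le> prod_list (map g xs)"
  using assms
proof (induction xs)
  case (Cons a xs)
  have fg: "\<forall>x\<in>set (a # xs). 0 \<le> f x \<and> f x \<le> g x" using Cons.prems by blast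
  then have "f a \<le> g a" "0 \<le> g a" by force+
  moreover have "0 \<le> prod_list (map f xs)" by (rule prod_list_nonneg) (use fg in auto)
  moreover have "prod_list (map f xs) \<le> prod_list (map g xs)" using Cons.IH fg by simp
  ultimately show ?case by (simp add: mult_mono)
qed simp

definition remove_nth :: "nat \<Rightarrow> 'a list \<Rightarrow> 'a list" where
  "remove_nth i xs = take i xs @ drop (Suc i) xs"

lemma length_remove_nth: "i < length xs \<Longrightarrow> length (remove_nth i xs) = length xs - 1"
  unfolding remove_nth_def by simp

lemma set_remove_nth_subset: "set (remove_nth i xs) \<subseteq> set xs"
  unfolding remove_nth_def using set_drop_subset[of "Suc i" xs] set_take_subset[of i xs] by auto

lemma prod_list_remove_nth:
  fixes xs :: "'a::comm_monoid_mult list"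
  shows "i < length xs \<Longrightarrow> prod_list xs = xs ! i * prod_list (remove_nth i xs)"
  unfolding remove_nth_def by (subst id_take_nth_drop[of i xs]) (simp_all add: mult_ac)

lemma remove_nth_inject:
  assumes "i < length xs" "i < length ys" "remove_nth i xs = remove_nth i ys" "xs ! i = ys ! i"
  shows "xs = ys"
proof -
  have "take i xs = take i ys" "drop (Suc i) xs = drop (Suc i) ys"
    using assms arg_cong[OF assms(3), of "take i"] arg_cong[OF assms(3), of "drop i"]
    unfolding remove_nth_def by simp_all
  then show ?thesis using id_take_nth_drop[OF assms(1)] id_take_nth_drop[OF assms(2)] assms(4) by metis
qed

lemma card_tuples_nth_eq_le:
  assumes "finite Q" "0 < q" "i \<le> k"
  shows "card {xs \<in> tuples Q (Suc k). prod_list xs = l \<and> xs ! i = q} \<le> prod_count Q k (l div q)"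
  unfolding prod_count_def
proof (rule card_inj_on_le[where f = "remove_nth i"])
  show "inj_on (remove_nth i) {xs \<in> tuples Q (Suc k). prod_list xs = l \<and> xs ! i = q}"
  proof (rule inj_onI)
    fix xs ys
    assume "xs \<in> {xs \<in> tuples Q (Suc k). prod_list xs = l \<and> xs ! i = q}"
      "ys \<in> {xs \<in> tuples Q (Suc k). prod_list xs = l \<and> xs ! i = q}" "remove_nth i xs = remove_nth i ys"
    then show "xs = ys" using assms(3) by (auto simp: tuples_def intro!: remove_nth_inject[of i xs ys])
  qed
  show "remove_nth i ` {xs \<in> tuples Q (Suc k). prod_list xs = l \<and> xs ! i = q}
      \<subseteq> {xs \<in> tuples Q k. prod_list xs = l div q}"
  proof
    fix ys assume "ys \<in> remove_nth i ` {xs \<in> tuples Q (Suc k). prod_list xs = l \<and> xs ! i = q}"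
    then obtain xs where xs: "xs \<in> tuples Q (Suc k)" "prod_list xs = l" "xs ! i = q" "ys = remove_nth i xs"
      by auto
    then have i: "i < length xs" using assms(3) unfolding tuples_def by simp
    have "ys \<in> tuples Q k"
      using xs set_remove_nth_subset[of i xs] length_remove_nth[OF i] unfolding tuples_def by auto
    moreover have "l = q * prod_list ys" using prod_list_remove_nth[OF i] xs by simp
    ultimately show "ys \<in> {xs \<in> tuples Q k. prod_list xs = l div q}" using assms(2) by simp
  qed
qed (use finite_tuples[OF assms(1)] in simp)

text \<open>Double counting: \<open>v\<^sub>p(l)\<close> is the sum of \<open>v\<^sub>p\<close> over the \<open>k + 1\<close> entries of each tuple, and an
  entry contributes only if it is \<open>p\<close> or \<open>p\<^sup>2\<close>; removing that entry leaves a \<open>k\<close>-tuple.\<close>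
lemma multiplicity_mult_prod_count_le:
  assumes Q: "finite Q" "\<forall>q\<in>Q. prime_or_prime_square q" and p: "prime p"
  shows "multiplicity p l * prod_count Q (Suc k) l
    \<le> Suc k * (prod_count Q k (l div p) + (if p^2 dvd l then 2 * prod_count Q k (l div p^2) else 0))"
proof -
  define A where "A = {xs \<in> tuples Q (Suc k). prod_list xs = l}"
  define r where "r = prod_count Q k (l div p) + (if p^2 dvd l then 2 * prod_count Q k (l div p^2) else 0)"
  have A: "finite A" unfolding A_def using finite_tuples[OF Q(1)] by simp
  have entries: "xs ! i \<in> Q" if "xs \<in> A" "i \<le> k" for xs i
    using that unfolding A_def tuples_def by (auto simp: subset_iff)
  have column: "(\<Sum>xs\<in>A. multiplicity p (xs ! i)) \<le> r" if i: "i \<le> k" for i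
  proof -
    have "p \<noteq> p^2" using prime_gt_1_nat[OF p] by (simp add: power2_eq_square)
    have "(\<Sum>xs\<in>A. multiplicity p (xs ! i))
        = (\<Sum>xs\<in>A. (if xs ! i = p then 1 else 0) + (if xs ! i = p^2 then 2 else 0))"
    proof (rule sum.cong[OF refl])
      fix xs assume "xs \<in> A"
      then have "prime_or_prime_square (xs ! i)" using entries[OF _ i] Q(2) by blast
      then show "multiplicity p (xs ! i) = (if xs ! i = p then 1 else 0) + (if xs ! i = p^2 then 2 else 0)"
        using \<open>p \<noteq> p^2\<close> by (simp add: multiplicity_prime_or_prime_square[OF _ p])
    qed
    also have "\<dots> = card {xs\<in>A. xs ! i = p} + 2 * card {xs\<in>A. xs ! i = p^2}"
      using A by (simp add: sum.distrib sum.inter_filter[symmetric])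
    also have "card {xs\<in>A. xs ! i = p} \<le> prod_count Q k (l div p)"
      using card_tuples_nth_eq_le[OF Q(1) prime_gt_0_nat[OF p] i, of l] unfolding A_def
      by (simp add: conj_assoc)
    also have "2 * card {xs\<in>A. xs ! i = p^2} \<le> (if p^2 dvd l then 2 * prod_count Q k (l div p^2) else 0)"
    proof (cases "p^2 dvd l")
      case True
      then show ?thesis
        using card_tuples_nth_eq_le[OF Q(1) _ i, of "p^2" l] prime_gt_0_nat[OF p] unfolding A_def
        by (simp add: conj_assoc)
    next
      case False
      have entry_dvd: "xs ! i dvd l" if "xs \<in> A" for xs
      proof -
        have "i < length xs" "prod_list xs = l" using that i unfolding A_def tuples_def by auto
        then show ?thesis using prod_list_remove_nth[of i xs] by (metis dvd_triv_left)
      qed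
      have "xs ! i \<noteq> p^2" if "xs \<in> A" for xs using entry_dvd[OF that] False by auto
      with False show ?thesis by (auto simp: card_eq_0_iff)
    qed
    finally show ?thesis unfolding r_def by simp
  qed
  have row: "multiplicity p l = (\<Sum>i<Suc k. multiplicity p (xs ! i))" if "xs \<in> A" for xs
  proof -
    have "set xs \<subseteq> Q" "length xs = Suc k" "prod_list xs = l"
      using that unfolding A_def tuples_def by auto
    then show ?thesis
      using multiplicity_prod_list[OF p, of xs] prime_or_prime_square_pos Q(2) by auto
  qed
  have "multiplicity p l * card A = (\<Sum>xs\<in>A. multiplicity p l)" by simp
  also have "\<dots> = (\<Sum>xs\<in>A. \<Sum>i<Suc k. multiplicity p (xs ! i))" using row by (rule sum.cong[OF refl])
  also have "\<dots> = (\<Sum>i<Suc k. \<Sum>xs\<in>A. multiplicity p (xs ! i))" by (rule sum.swap)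
  also have "\<dots> \<le> (\<Sum>i<Suc k. r)" by (intro sum_mono column) simp
  finally show ?thesis unfolding A_def r_def prod_count_def by simp
qed

lemma le_bigOmega_if_prod_count_pos:
  assumes "\<forall>q\<in>Q. prime_or_prime_square q" "0 < prod_count Q k l"
  shows "k \<le> bigOmega l"
proof -
  obtain xs where xs: "set xs \<subseteq> Q" "length xs = k" "prod_list xs = l"
    using assms(2) unfolding prod_count_def tuples_def by (auto simp: card_gt_0_iff)
  have "k = sum_list (map (\<lambda>_. 1) xs)" using xs by (simp add: sum_list_triv)
  also have "\<dots> \<le> sum_list (map bigOmega xs)"
    using xs assms(1) by (intro sum_list_mono) (auto simp: bigOmega_prime_or_prime_square)
  also have "\<dots> = bigOmega l"
    unfolding xs(3)[symmetric] using xs(1) assms(1) prime_or_prime_square_pos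
    by (subst bigOmega_prod_list) auto
  finally show ?thesis .
qed

theorem prod_count_le:
  assumes Q: "finite Q" "\<forall>q\<in>Q. prime_or_prime_square q"
  shows "prod_count Q k l \<le> fact k * 2 ^ (bigOmega l - k)"
proof (induction k arbitrary: l)
  case 0
  have "prod_count Q 0 l \<le> card {[] :: nat list}"
    unfolding prod_count_def tuples_0 by (intro card_mono) auto
  also have "\<dots> \<le> 2 ^ bigOmega l" by simp
  finally have "prod_count Q 0 l \<le> 2 ^ bigOmega l" .
  then show ?case by simp
next
  case (Suc k)
  show ?case
  proof (cases "prod_count Q (Suc k) l = 0")
    case False
    then obtain xs where xs: "xs \<in> tuples Q (Suc k)" "prod_list xs = l"
      unfolding prod_count_def by (auto simp: card_gt_0_iff)
    then have hd: "hd xs \<in> Q" "hd xs dvd l"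
      unfolding tuples_def by (auto simp: length_Suc_conv)
    obtain p where "prime p" "hd xs = p \<or> hd xs = p^2"
      using Q(2) hd(1) by (meson prime_or_prime_squareE)
    with hd(2) have p: "prime p" "p dvd l"
      by (auto simp: power2_eq_square intro: dvd_trans)
    have l: "l \<noteq> 0"
      using xs Q(2) prime_or_prime_square_pos prod_list_pos[of xs] unfolding tuples_def by auto
    define J where "J = bigOmega l - Suc k"
    \<comment> \<open>\<open>c \<le> v\<^sub>p(l)\<close> pays for the factor \<open>2\<close> in front of \<open>R\<^sub>k(l/p\<^sup>2)\<close> in the double counting bound\<close>
    define c :: nat where "c = (if p^2 dvd l then 2 else 1)"
    have c: "0 < c" "c \<le> multiplicity p l"
      using p l unfolding c_def by (auto simp: power_dvd_iff_le_multiplicity prime_gt_1_nat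
          intro: multiplicity_geI)
    have "prod_count Q k (l div p) \<le> fact k * 2 ^ J"
      using Suc.IH[of "l div p"] bigOmega_div[OF p(2) l] bigOmega_prime[OF p(1)] unfolding J_def by simp
    moreover have "2 * prod_count Q k (l div p^2) \<le> fact k * 2 ^ J" if "p^2 dvd l"
    proof (cases "prod_count Q k (l div p^2) = 0")
      case False
      then have "k \<le> bigOmega (l div p^2)" using le_bigOmega_if_prod_count_pos[OF Q(2)] by simp
      moreover have "bigOmega l = bigOmega (l div p^2) + 2"
        using bigOmega_div[OF that l] bigOmega_prime_power[OF p(1)] by simp
      ultimately have "J = Suc (bigOmega (l div p^2) - k)" unfolding J_def by simp
      then show ?thesis using Suc.IH[of "l div p^2"] by simp
    qed simp
    ultimately have r: "prod_count Q k (l div p) + (if p^2 dvd l then 2 * prod_count Q k (l div p^2) else 0)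
        \<le> c * (fact k * 2 ^ J)"
      unfolding c_def by auto
    have "c * prod_count Q (Suc k) l \<le> multiplicity p l * prod_count Q (Suc k) l"
      using c by simp
    also have "\<dots> \<le> Suc k * (c * (fact k * 2 ^ J))"
      using multiplicity_mult_prod_count_le[OF Q p(1), of l k] r by (meson le_trans mult_le_mono2)
    also have "\<dots> = c * (fact (Suc k) * 2 ^ J)" by (simp add: algebra_simps)
    finally show ?thesis using c unfolding J_def by simp
  qed simp
qed

lemma power_sum_list_diff_length:
  fixes b :: "'a::comm_monoid_mult"
  shows "(\<And>x. x \<in> set xs \<Longrightarrow> 1 \<le> f x) \<Longrightarrow>
    b ^ (sum_list (map f xs) - length xs) = prod_list (map (\<lambda>x. b ^ (f x - 1)) xs)"
proof (induction xs)
  case (Cons a xs)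
  have "length xs \<le> sum_list (map f xs)"
    using Cons.prems sum_list_mono[of xs "\<lambda>_. 1" f] by (simp add: sum_list_triv)
  then have "sum_list (map f (a # xs)) - length (a # xs) = (f a - 1) + (sum_list (map f xs) - length xs)"
    using Cons.prems by simp
  then have "b ^ (sum_list (map f (a # xs)) - length (a # xs))
      = b ^ (f a - 1) * b ^ (sum_list (map f xs) - length xs)"
    by (simp only: power_add)
  then show ?case using Cons by simp
qed simp

corollary prod_count_prod_list_le:
  assumes "finite Q" "\<forall>q\<in>Q. prime_or_prime_square q" "xs \<in> tuples Q k"
  shows "real (prod_count Q k (prod_list xs)) \<le> fact k * prod_list (map (\<lambda>q. 2 ^ (bigOmega q - 1)) xs)"
proof -
  have xs: "set xs \<subseteq> Q" "length xs = k" using assms(3) unfolding tuples_def by auto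
  have "real (prod_count Q k (prod_list xs)) \<le> real (fact k * 2 ^ (bigOmega (prod_list xs) - k))"
    by (rule of_nat_mono[OF prod_count_le[OF assms(1,2)]])
  also have "\<dots> = fact k * 2 ^ (bigOmega (prod_list xs) - k)" by simp
  also have "bigOmega (prod_list xs) = sum_list (map bigOmega xs)"
    using xs assms(2) prime_or_prime_square_pos by (subst bigOmega_prod_list) auto
  also have "(2::real) ^ (sum_list (map bigOmega xs) - k) = prod_list (map (\<lambda>q. 2 ^ (bigOmega q - 1)) xs)"
    unfolding xs(2)[symmetric] using xs assms(2)
    by (intro power_sum_list_diff_length) (auto simp: bigOmega_prime_or_prime_square)
  finally show ?thesis .
qed

section \<open>Divisors composed of primes from \<open>P\<close>\<close>

lemma finite_Collect_dvd_nat: "0 < n \<Longrightarrow> finite {d::nat. d dvd n \<and> Q d}"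
  by (rule finite_subset[of _ "{..n}"]) (auto intro: dvd_imp_le)

lemma dtilde_le_card_divisors: "0 < n \<Longrightarrow> dtilde P n \<le> card {d. d dvd n}"
  unfolding dtilde_def using finite_Collect_dvd_nat[of n "\<lambda>_. True"] by (intro card_mono) auto

lemma dtilde_mult_le:
  assumes "0 < a" "0 < b"
  shows "dtilde P (a * b) \<le> dtilde P a * dtilde P b"
proof -
  define D where "D n = {d. d dvd n \<and> (\<forall>p. prime p \<and> p dvd d \<longrightarrow> p \<in> P)}" for n
  have "D (a * b) \<subseteq> (\<lambda>(x, y). x * y) ` (D a \<times> D b)"
  proof
    fix d assume d: "d \<in> D (a * b)"
    then obtain x y where xy: "d = x * y" "x dvd a" "y dvd b"
      unfolding D_def using division_decomp by blast
    then have "x \<in> D a" "y \<in> D b" using d unfolding D_def by (auto intro: dvd_trans)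
    then show "d \<in> (\<lambda>(x, y). x * y) ` (D a \<times> D b)" using xy by auto
  qed
  then have "card (D (a * b)) \<le> card ((\<lambda>(x, y). x * y) ` (D a \<times> D b))"
    using assms by (intro card_mono) (auto simp: D_def finite_Collect_dvd_nat)
  also have "\<dots> \<le> card (D a) * card (D b)"
    using card_image_le[of "D a \<times> D b" "\<lambda>(x, y). x * y"] assms
    by (simp add: card_cartesian_product D_def finite_Collect_dvd_nat)
  finally show ?thesis unfolding dtilde_def D_def .
qed

lemma dtilde_prod_list_le:
  "(\<And>q. q \<in> set xs \<Longrightarrow> 0 < q) \<Longrightarrow> dtilde P (prod_list xs) \<le> prod_list (map (dtilde P) xs)"
proof (induction xs)
  case Nil
  have "dtilde P 1 \<le> card {d::nat. d dvd 1}" by (rule dtilde_le_card_divisors) simp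
  then show ?case by simp
next
  case (Cons a xs)
  then have "dtilde P (a * prod_list xs) \<le> dtilde P a * dtilde P (prod_list xs)"
    using prod_list_pos[of xs] by (intro dtilde_mult_le) auto
  also have "\<dots> \<le> dtilde P a * prod_list (map (dtilde P) xs)"
    using Cons by (intro mult_le_mono2) auto
  finally show ?case by simp
qed

lemma dtilde_prime_or_prime_square_le:
  assumes "prime_or_prime_square q"
  shows "dtilde P q \<le> (if prime q then 2 else 3)"
proof -
  obtain p where p: "prime p" "q = p \<or> q = p^2"
    using assms by (elim prime_or_prime_squareE)
  have "{d. d dvd p} \<subseteq> {1, p}" using p(1) by (auto simp: prime_nat_iff)
  moreover have "{d. d dvd p^2} \<subseteq> {1, p, p^2}"
  proof
    fix d assume "d \<in> {d. d dvd p^2}"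
    then obtain i where "i \<le> 2" "d = p ^ i" using divides_primepow_nat[OF p(1)] by auto
    then show "d \<in> {1, p, p^2}" by (auto simp: le_Suc_eq numeral_2_eq_2)
  qed
  ultimately have "card {d. d dvd p} \<le> card {1, p}" "card {d. d dvd p^2} \<le> card {1, p, p^2}"
    by (simp_all add: card_mono)
  moreover have "card {1, p} \<le> 2" "card {1, p, p^2} \<le> 3"
    by (simp_all add: card_insert_if)
  ultimately have "card {d. d dvd p} \<le> 2" "card {d. d dvd p^2} \<le> 3" by simp_all
  then show ?thesis
    using p dtilde_le_card_divisors[of q P] prime_gt_0_nat[OF p(1)] by (auto simp: prime_power_iff)
qed

lemma two_power_bigOmega_le_vq: "prime_or_prime_square q \<Longrightarrow> 2 ^ (bigOmega q - 1) \<le> vq q"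
  by (simp add: bigOmega_prime_or_prime_square vq_def)

lemma dtilde_mult_two_power_bigOmega_le_vq:
  "prime_or_prime_square q \<Longrightarrow> real (dtilde P q) * 2 ^ (bigOmega q - 1) \<le> 2 * vq q"
  using dtilde_prime_or_prime_square_le[of q P]
  by (auto simp: bigOmega_prime_or_prime_square vq_def)

text \<open>Among pairs \<open>(n, xs)\<close> with \<open>n \<cdot> \<Prod>xs = m\<close>, those sharing the product \<open>l = \<Prod>xs\<close> are
  determined by \<open>xs\<close>, so they have total weight at most \<open>1\<close>; and \<open>l\<close> is a divisor of \<open>m\<close>
  counted by \<open>dtilde P m\<close>.\<close>
lemma sum_inverse_prod_count_le_dtilde:
  fixes I :: "(nat \<times> nat list) set"
  assumes Q: "finite Q" "\<forall>q\<in>Q. \<forall>p. prime p \<and> p dvd q \<longrightarrow> p \<in> P"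
    and I: "finite I" "\<forall>j\<in>I. snd j \<in> tuples Q k" and m: "0 < m"
  shows "(\<Sum>j\<in>{j\<in>I. fst j * prod_list (snd j) = m}. 1 / real (prod_count Q k (prod_list (snd j))))
    \<le> real (dtilde P m)"
proof -
  define F where "F = {j\<in>I. fst j * prod_list (snd j) = m}"
  define g where "g j = prod_list (snd j)" for j :: "nat \<times> nat list"
  have F: "finite F" "\<forall>j\<in>F. snd j \<in> tuples Q k \<and> fst j * g j = m"
    using I unfolding F_def g_def by auto
  have "(\<Sum>j\<in>F. 1 / real (prod_count Q k (g j))) = (\<Sum>l\<in>g ` F. \<Sum>j\<in>{j\<in>F. g j = l}. 1 / real (prod_count Q k l))"
    by (subst sum.image_gen[OF F(1), of _ g]) (intro sum.cong; auto)
  also have "\<dots> \<le> (\<Sum>l\<in>g ` F. 1)"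
  proof (rule sum_mono)
    fix l assume "l \<in> g ` F"
    then have l: "0 < l" using F(2) m by (auto simp: gr0I)
    have "inj_on snd {j\<in>F. g j = l}"
    proof (rule inj_onI)
      fix i j assume i: "i \<in> {j\<in>F. g j = l}" and j: "j \<in> {j\<in>F. g j = l}" and "snd i = snd j"
      moreover have "fst i * l = m" "fst j * l = m" using F(2) i j by auto
      then have "fst i = fst j" using l by (metis mult_right_cancel less_not_refl2)
      ultimately show "i = j" by (simp add: prod_eq_iff)
    qed
    moreover have "snd ` {j\<in>F. g j = l} \<subseteq> {xs \<in> tuples Q k. prod_list xs = l}"
      using F(2) unfolding g_def by auto
    ultimately have "card {j\<in>F. g j = l} \<le> prod_count Q k l"
      unfolding prod_count_def using finite_tuples[OF Q(1)] by (intro card_inj_on_le) auto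
    then show "(\<Sum>j\<in>{j\<in>F. g j = l}. 1 / real (prod_count Q k l)) \<le> 1"
      by (cases "prod_count Q k l = 0") (auto simp: divide_le_eq_1)
  qed
  also have "\<dots> = real (card (g ` F))" by simp
  also have "\<dots> \<le> real (dtilde P m)"
  proof -
    have "g ` F \<subseteq> {d. d dvd m \<and> (\<forall>p. prime p \<and> p dvd d \<longrightarrow> p \<in> P)}"
    proof safe
      fix j assume j: "j \<in> F"
      then show "g j dvd m" using F(2) by (metis dvd_triv_right)
      fix p assume p: "prime p" "p dvd g j"
      then obtain q where "q \<in> set (snd j)" "p dvd q"
        unfolding g_def using prime_dvd_prod_mset_iff[OF p(1), of "mset (snd j)"]
        by (auto simp: prod_mset_prod_list)
      then show "p \<in> P" using Q(2) F(2) j p(1) unfolding tuples_def by auto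
    qed
    then show ?thesis unfolding dtilde_def using m by (intro of_nat_mono card_mono finite_Collect_dvd_nat)
  qed
  finally show ?thesis unfolding F_def g_def .
qed

lemma prod_count_prod_list_le_vq:
  assumes Q: "finite Q" "\<forall>q\<in>Q. prime_or_prime_square q" and xs: "xs \<in> tuples Q k"
  shows "real (prod_count Q k (prod_list xs)) \<le> fact k * prod_list (map vq xs)"
proof -
  have "prod_list (map (\<lambda>q. 2 ^ (bigOmega q - 1)) xs) \<le> prod_list (map vq xs)"
  proof (rule prod_list_map_mono)
    fix q assume "q \<in> set xs"
    then have "prime_or_prime_square q" using xs Q(2) by (auto simp: tuples_def)
    then show "0 \<le> (2::real) ^ (bigOmega q - 1) \<and> 2 ^ (bigOmega q - 1) \<le> vq q"
      using two_power_bigOmega_le_vq by simp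
  qed
  with prod_count_prod_list_le[OF Q xs] show ?thesis
    by (meson fact_ge_zero mult_left_mono order_trans)
qed

lemma prod_count_mult_sum_inverse_prod_count_le:
  fixes I :: "(nat \<times> nat list) set"
  assumes Q: "finite Q" "\<forall>q\<in>Q. prime_or_prime_square q" "\<forall>q\<in>Q. \<forall>p. prime p \<and> p dvd q \<longrightarrow> p \<in> P"
    and I: "finite I" "\<forall>j\<in>I. snd j \<in> tuples Q k" and n: "0 < n" and xs: "xs \<in> tuples Q k"
  shows "real (prod_count Q k (prod_list xs))
      * (\<Sum>i\<in>{i\<in>I. fst i * prod_list (snd i) = n * prod_list xs}. 1 / real (prod_count Q k (prod_list (snd i))))
    \<le> fact k * real (dtilde P n) * prod_list (map (\<lambda>q. 2 * vq q) xs)"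
proof -
  have elements: "\<forall>q\<in>set xs. prime_or_prime_square q" using xs Q(2) unfolding tuples_def by auto
  then have pos: "\<And>q. q \<in> set xs \<Longrightarrow> 0 < q" using prime_or_prime_square_pos by blast
  have "(\<Sum>i\<in>{i\<in>I. fst i * prod_list (snd i) = n * prod_list xs}. 1 / real (prod_count Q k (prod_list (snd i))))
      \<le> real (dtilde P (n * prod_list xs))"
    using n prod_list_pos[OF pos] by (intro sum_inverse_prod_count_le_dtilde Q(1,3) I) simp
  also have "\<dots> \<le> real (dtilde P n * prod_list (map (dtilde P) xs))"
    using dtilde_mult_le[OF n prod_list_pos[OF pos], where P = P] dtilde_prod_list_le[OF pos, where P = P]
    by (intro of_nat_mono) (meson le_trans mult_le_mono2)
  finally have "real (prod_count Q k (prod_list xs))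
      * (\<Sum>i\<in>{i\<in>I. fst i * prod_list (snd i) = n * prod_list xs}. 1 / real (prod_count Q k (prod_list (snd i))))
    \<le> (fact k * prod_list (map (\<lambda>q. 2 ^ (bigOmega q - 1)) xs))
      * (real (dtilde P n) * prod_list (map (\<lambda>q. real (dtilde P q)) xs))"
    using prod_count_prod_list_le[OF Q(1,2) xs]
    by (intro mult_mono sum_nonneg) (auto simp: of_nat_prod_list_map)
  also have "\<dots> = fact k * real (dtilde P n) * prod_list (map (\<lambda>q. real (dtilde P q) * 2 ^ (bigOmega q - 1)) xs)"
    by (simp add: prod_list_map_mult[symmetric] ac_simps)
  also have "\<dots> \<le> fact k * real (dtilde P n) * prod_list (map (\<lambda>q. 2 * vq q) xs)"
  proof (intro mult_left_mono prod_list_map_mono)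
    fix q assume "q \<in> set xs"
    then show "0 \<le> real (dtilde P q) * 2 ^ (bigOmega q - 1) \<and> real (dtilde P q) * 2 ^ (bigOmega q - 1) \<le> 2 * vq q"
      using elements dtilde_mult_two_power_bigOmega_le_vq by simp
  qed simp
  finally show ?thesis .
qed

section \<open>The moments\<close>

lemma of_nat_powr_minus_imaginary:
  assumes "0 < n"
  shows "(of_nat n :: complex) powr (- \<i> * of_real t) = cis (-(t * ln (real n)))"
proof -
  have "(of_nat n :: complex) powr (- \<i> * of_real t) = exp (\<i> * of_real (-(t * ln (real n))))"
    using assms by (simp add: powr_def Ln_of_nat algebra_simps)
  then show ?thesis by (simp add: cis_conv_exp)
qed

lemma divide_of_nat_powr_half_plus_imaginary:
  assumes "0 < q"
  shows "a / (of_nat q :: complex) powr (1/2 + \<i> * of_real t)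
    = a / of_real (sqrt (real q)) * cis (-(t * ln (real q)))"
proof -
  have sqrt: "exp (ln (real q) / 2) = sqrt (real q)"
    using assms by (simp add: powr_half_sqrt[symmetric] powr_def)
  have "(of_nat q :: complex) powr (1/2 + \<i> * of_real t)
      = exp (of_real (ln (real q) / 2)) * exp (\<i> * of_real (t * ln (real q)))"
    using assms by (simp add: powr_def Ln_of_nat exp_add[symmetric] algebra_simps)
  also have "\<dots> = of_real (sqrt (real q)) * cis (t * ln (real q))"
    by (simp only: exp_of_real sqrt cis_conv_exp)
  finally have "(of_nat q :: complex) powr (1/2 + \<i> * of_real t) = of_real (sqrt (real q)) * cis (t * ln (real q))" .
  moreover have "cis (t * ln (real q)) * cis (-(t * ln (real q))) = 1" by (simp add: cis_mult)
  ultimately show ?thesis using assms by (simp add: field_simps)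
qed

lemma Dpoly_eq_sum_cis: "Dpoly x c t = (\<Sum>n\<in>{n. 1 \<le> n \<and> real n \<le> x}. c n * cis (-(t * ln (real n))))"
  unfolding Dpoly_def using of_nat_powr_minus_imaginary by (intro sum.cong refl) auto

lemma prod_list_cis:
  assumes "\<And>q. q \<in> set xs \<Longrightarrow> 0 < q"
  shows "prod_list (map (\<lambda>q. f q * cis (-(t * ln (real q)))) xs)
    = prod_list (map f xs) * cis (-(t * ln (real (prod_list xs))))"
  using assms
proof (induction xs)
  case (Cons a xs)
  then have "ln (real (a * prod_list xs)) = ln (real a) + ln (real (prod_list xs))"
    using prod_list_pos[of xs] by (simp add: ln_mult)
  moreover have "cis (- (t * ln (real a))) * cis (- (t * ln (real (prod_list xs))))
      = cis (- (t * ln (real a)) - t * ln (real (prod_list xs)))" by (simp add: cis_mult)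
  ultimately show ?case using Cons by (simp add: algebra_simps)
qed simp

lemma Qpoly_power_eq_sum_tuples:
  assumes "finite Qs" "0 \<notin> Qs"
  shows "(Qpoly Qs a t) ^ k = (\<Sum>xs\<in>tuples Qs k.
    prod_list (map (\<lambda>q. a q / of_real (sqrt (real q))) xs) * cis (-(t * ln (real (prod_list xs)))))"
proof -
  have "Qpoly Qs a t = (\<Sum>q\<in>Qs. a q / of_real (sqrt (real q)) * cis (-(t * ln (real q))))"
    unfolding Qpoly_def using assms(2)
    by (intro sum.cong refl divide_of_nat_powr_half_plus_imaginary) (auto intro: gr0I)
  then have "(Qpoly Qs a t) ^ k = (\<Sum>xs\<in>tuples Qs k.
      prod_list (map (\<lambda>q. a q / of_real (sqrt (real q)) * cis (-(t * ln (real q)))) xs))"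
    by (simp add: power_sum_eq_sum_tuples[OF assms(1)])
  also have "\<dots> = (\<Sum>xs\<in>tuples Qs k.
      prod_list (map (\<lambda>q. a q / of_real (sqrt (real q))) xs) * cis (-(t * ln (real (prod_list xs)))))"
    using assms(2) by (intro sum.cong refl prod_list_cis) (auto simp: tuples_def intro: gr0I)
  finally show ?thesis .
qed

lemma finite_Collect_of_nat_le: "finite {n::nat. 1 \<le> n \<and> real n \<le> x}"
  by (rule finite_subset[of _ "{..nat \<lfloor>x\<rfloor>}"]) (auto simp: le_nat_iff le_floor_iff)

lemma prod_count_prod_list_pos: "finite Q \<Longrightarrow> xs \<in> tuples Q k \<Longrightarrow> 0 < prod_count Q k (prod_list xs)"
  unfolding prod_count_def by (subst card_gt_0_iff) (auto simp: finite_tuples)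

lemma norm_prod_list_divide_sqrt_squared:
  assumes "\<And>q. q \<in> set xs \<Longrightarrow> 0 < q"
  shows "(cmod (prod_list (map (\<lambda>q. a q / of_real (sqrt (real q))) xs)))^2
    = prod_list (map (\<lambda>q. (cmod (a q))^2 / real q) xs)"
proof -
  have "(cmod (prod_list (map (\<lambda>q. a q / of_real (sqrt (real q))) xs)))^2
      = prod_list (map (\<lambda>q. (cmod (a q) / sqrt (real q))^2) xs)"
    by (simp add: norm_prod_list_map norm_divide power2_eq_square prod_list_map_mult)
  also have "\<dots> = prod_list (map (\<lambda>q. (cmod (a q))^2 / real q) xs)"
    using assms by (intro arg_cong[where f = prod_list] map_cong) (auto simp: power_divide)
  finally show ?thesis .
qed

lemma Dpoly_mult_Qpoly_power_eq:
  assumes Qs: "finite Qs" "0 \<notin> Qs"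
  shows "Dpoly x c t * (Qpoly Qs a t) ^ k = (\<Sum>j\<in>{n::nat. 1 \<le> n \<and> real n \<le> x} \<times> tuples Qs k.
    (c (fst j) * prod_list (map (\<lambda>q. a q / of_real (sqrt (real q))) (snd j)))
      * cis (-(t * ln (real (fst j * prod_list (snd j))))))"
proof -
  define \<alpha> where "\<alpha> q = a q / of_real (sqrt (real q))" for q
  have "Dpoly x c t * (Qpoly Qs a t) ^ k = (\<Sum>j\<in>{n::nat. 1 \<le> n \<and> real n \<le> x} \<times> tuples Qs k.
      (c (fst j) * cis (-(t * ln (real (fst j)))))
        * (prod_list (map \<alpha> (snd j)) * cis (-(t * ln (real (prod_list (snd j)))))))"
    unfolding Dpoly_eq_sum_cis Qpoly_power_eq_sum_tuples[OF Qs] \<alpha>_def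
    by (simp add: sum_product sum.cartesian_product case_prod_unfold)
  also have "\<dots> = (\<Sum>j\<in>{n::nat. 1 \<le> n \<and> real n \<le> x} \<times> tuples Qs k.
      (c (fst j) * prod_list (map \<alpha> (snd j))) * cis (-(t * ln (real (fst j * prod_list (snd j))))))"
  proof (rule sum.cong[OF refl])
    fix j assume j: "j \<in> {n::nat. 1 \<le> n \<and> real n \<le> x} \<times> tuples Qs k"
    then have "0 < prod_list (snd j)"
      using Qs(2) by (intro prod_list_pos) (auto simp: tuples_def intro: gr0I)
    with j have "ln (real (fst j * prod_list (snd j))) = ln (real (fst j)) + ln (real (prod_list (snd j)))"
      by (auto simp: ln_mult)
    moreover have "cis (-(t * ln (real (fst j)))) * cis (-(t * ln (real (prod_list (snd j)))))
        = cis (-(t * ln (real (fst j))) - t * ln (real (prod_list (snd j))))" by (simp add: cis_mult)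
    ultimately show "(c (fst j) * cis (-(t * ln (real (fst j)))))
          * (prod_list (map \<alpha> (snd j)) * cis (-(t * ln (real (prod_list (snd j))))))
        = (c (fst j) * prod_list (map \<alpha> (snd j))) * cis (-(t * ln (real (fst j * prod_list (snd j)))))"
      by (simp add: algebra_simps)
  qed
  finally show ?thesis unfolding \<alpha>_def .
qed

text \<open>\<open>D(t) Q(t)\<^sup>k\<close> is a Dirichlet polynomial indexed by the pairs \<open>(n, xs)\<close>, with frequency
  \<open>n \<cdot> \<Prod>xs\<close> and Cauchy--Schwarz weight \<open>1 / R\<^sub>k(\<Prod>xs)\<close>.\<close>
lemma integral_Dpoly_Qpoly_power_le:
  fixes c a :: "nat \<Rightarrow> complex"
  assumes Qs: "finite Qs" "0 \<notin> Qs" and x: "1 \<le> x" and T: "x * real (Max Qs) ^ k < T"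
  defines "I \<equiv> {n::nat. 1 \<le> n \<and> real n \<le> x} \<times> tuples Qs k"
    and "R \<equiv> \<lambda>xs. real (prod_count Qs k (prod_list xs))"
  shows "integral {T..2*T} (\<lambda>t. (cmod (Dpoly x c t))^2 * (cmod (Qpoly Qs a t))^(2*k))
    \<le> 34 * T * (\<Sum>j\<in>I. (cmod (c (fst j)))^2 * prod_list (map (\<lambda>q. (cmod (a q))^2 / real q) (snd j))
        * R (snd j) * (\<Sum>i\<in>{i\<in>I. fst i * prod_list (snd i) = fst j * prod_list (snd j)}. 1 / R (snd i)))"
proof -
  define z where "z j = c (fst j) * prod_list (map (\<lambda>q. a q / of_real (sqrt (real q))) (snd j))"
    for j :: "nat \<times> nat list"
  define N where "N = x * real (Max Qs) ^ k"
  have I: "finite I" unfolding I_def using finite_Collect_of_nat_le finite_tuples[OF Qs(1)] by simp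
  have positive: "\<And>q. q \<in> set xs \<Longrightarrow> 0 < q" if "xs \<in> tuples Qs k" for xs
    using that Qs(2) unfolding tuples_def by (auto intro: gr0I)
  have frequencies: "\<forall>j\<in>I. 0 < fst j * prod_list (snd j) \<and> real (fst j * prod_list (snd j)) \<le> N"
  proof
    fix j assume j: "j \<in> I"
    then have "set (snd j) \<subseteq> Qs" "length (snd j) = k" unfolding I_def tuples_def by auto
    then have "prod_list (snd j) \<le> Max Qs ^ k"
      using Max_ge[OF Qs(1)] by (auto intro!: prod_list_le_power)
    then have "real (prod_list (snd j)) \<le> real (Max Qs) ^ k" by (simp flip: of_nat_power)
    then have "real (fst j) * real (prod_list (snd j)) \<le> N"
      using j x unfolding I_def N_def by (intro mult_mono) auto
    then show "0 < fst j * prod_list (snd j) \<and> real (fst j * prod_list (snd j)) \<le> N"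
      using j prod_list_pos[OF positive] unfolding I_def by auto
  qed
  have "0 \<le> N" unfolding N_def using x by simp
  then have N: "0 \<le> N" "N \<le> T" "0 < T" using T unfolding N_def by auto
  have R: "\<forall>j\<in>I. 0 < 1 / R (snd j)"
    unfolding I_def R_def using prod_count_prod_list_pos[OF Qs(1)] by auto
  have "(cmod (Dpoly x c t))^2 * (cmod (Qpoly Qs a t))^(2*k) = (cmod (Dpoly x c t * (Qpoly Qs a t)^k))^2" for t
    by (simp add: norm_mult norm_power power_mult[symmetric] power_mult_distrib mult.commute)
  then have "integral {T..2*T} (\<lambda>t. (cmod (Dpoly x c t))^2 * (cmod (Qpoly Qs a t))^(2*k))
      = integral {T..2*T} (\<lambda>t. (cmod (\<Sum>j\<in>I. z j * cis (-(t * ln (real (fst j * prod_list (snd j)))))))^2)"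
    unfolding Dpoly_mult_Qpoly_power_eq[OF Qs] I_def z_def by simp
  also have "\<dots> \<le> 34 * T * (\<Sum>j\<in>I. (cmod (z j))^2 / (1 / R (snd j))
      * (\<Sum>i\<in>{i\<in>I. fst i * prod_list (snd i) = fst j * prod_list (snd j)}. 1 / R (snd i)))"
    by (rule integral_norm_dirichlet_polynomial_family_squared_le[OF I frequencies N R])
  also have "(\<Sum>j\<in>I. (cmod (z j))^2 / (1 / R (snd j))
      * (\<Sum>i\<in>{i\<in>I. fst i * prod_list (snd i) = fst j * prod_list (snd j)}. 1 / R (snd i)))
    = (\<Sum>j\<in>I. (cmod (c (fst j)))^2 * prod_list (map (\<lambda>q. (cmod (a q))^2 / real q) (snd j))
        * R (snd j) * (\<Sum>i\<in>{i\<in>I. fst i * prod_list (snd i) = fst j * prod_list (snd j)}. 1 / R (snd i)))"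
    unfolding z_def I_def
    by (intro sum.cong refl) (auto simp: norm_mult power_mult_distrib norm_prod_list_divide_sqrt_squared positive)
  finally show ?thesis .
qed

lemma sum_cartesian_product_mult:
  fixes F :: "'a \<Rightarrow> 'c::comm_semiring_1" and G :: "'b \<Rightarrow> 'c"
  shows "(\<Sum>j\<in>A \<times> B. F (fst j) * G (snd j)) = (\<Sum>a\<in>A. F a) * (\<Sum>b\<in>B. G b)"
  by (simp add: sum_product sum.cartesian_product case_prod_unfold)

theorem integral_Dpoly_Qpoly_power_le_dtilde:
  fixes c a :: "nat \<Rightarrow> complex"
  assumes Qs: "finite Qs" "\<forall>q\<in>Qs. prime_or_prime_square q"
    and P: "\<forall>q\<in>Qs. \<forall>p. prime p \<and> p dvd q \<longrightarrow> p \<in> P"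
    and x: "1 \<le> x" and T: "x * real (Max Qs) ^ k < T"
  shows "(1/T) * integral {T..2*T} (\<lambda>t. (cmod (Dpoly x c t))^2 * (cmod (Qpoly Qs a t))^(2*k))
    \<le> 34 * (\<Sum>n\<in>{n. 1 \<le> n \<and> real n \<le> x}. real (dtilde P n) * (cmod (c n))^2)
        * fact k * (2 * (\<Sum>q\<in>Qs. vq q * (cmod (a q))^2 / real q))^k"
proof -
  define I where "I = {n::nat. 1 \<le> n \<and> real n \<le> x} \<times> tuples Qs k"
  define R where "R xs = real (prod_count Qs k (prod_list xs))" for xs
  define A where "A q = (cmod (a q))^2 / real q" for q
  have "0 \<le> x * real (Max Qs) ^ k" using x by simp
  with T have T0: "0 < T" by linarith
  have summand: "(cmod (c (fst j)))^2 * prod_list (map A (snd j)) * R (snd j)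
      * (\<Sum>i\<in>{i\<in>I. fst i * prod_list (snd i) = fst j * prod_list (snd j)}. 1 / R (snd i))
    \<le> real (dtilde P (fst j)) * (cmod (c (fst j)))^2 * (fact k * prod_list (map (\<lambda>q. 2 * vq q * A q) (snd j)))"
    if "j \<in> I" for j
  proof -
    obtain n xs where j: "j = (n, xs)" "0 < n" "xs \<in> tuples Qs k" using \<open>j \<in> I\<close> unfolding I_def by auto
    have "R xs * (\<Sum>i\<in>{i\<in>I. fst i * prod_list (snd i) = n * prod_list xs}. 1 / R (snd i))
        \<le> fact k * real (dtilde P n) * prod_list (map (\<lambda>q. 2 * vq q) xs)"
      unfolding R_def using finite_Collect_of_nat_le finite_tuples[OF Qs(1)]
      by (intro prod_count_mult_sum_inverse_prod_count_le[OF Qs P _ _ j(2,3)]) (auto simp: I_def)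
    then have "(cmod (c n))^2 * prod_list (map A xs)
        * (R xs * (\<Sum>i\<in>{i\<in>I. fst i * prod_list (snd i) = n * prod_list xs}. 1 / R (snd i)))
      \<le> (cmod (c n))^2 * prod_list (map A xs) * (fact k * real (dtilde P n) * prod_list (map (\<lambda>q. 2 * vq q) xs))"
      by (rule mult_left_mono) (auto simp: A_def intro!: mult_nonneg_nonneg prod_list_nonneg)
    also have "\<dots> = real (dtilde P n) * (cmod (c n))^2 * (fact k * prod_list (map (\<lambda>q. 2 * vq q * A q) xs))"
      by (simp add: prod_list_map_mult[symmetric] ac_simps)
    finally show ?thesis unfolding j(1) by (simp add: mult.assoc)
  qed
  have Qs0: "0 \<notin> Qs" using Qs(2) prime_or_prime_square_pos by blast
  have "integral {T..2*T} (\<lambda>t. (cmod (Dpoly x c t))^2 * (cmod (Qpoly Qs a t))^(2*k))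
      \<le> 34 * T * (\<Sum>j\<in>I. (cmod (c (fst j)))^2 * prod_list (map A (snd j)) * R (snd j)
        * (\<Sum>i\<in>{i\<in>I. fst i * prod_list (snd i) = fst j * prod_list (snd j)}. 1 / R (snd i)))"
    unfolding I_def R_def A_def by (rule integral_Dpoly_Qpoly_power_le[OF Qs(1) Qs0 x T])
  also have "\<dots> \<le> 34 * T * (\<Sum>j\<in>I. real (dtilde P (fst j)) * (cmod (c (fst j)))^2
          * (fact k * prod_list (map (\<lambda>q. 2 * vq q * A q) (snd j))))"
    using T0 summand by (intro mult_left_mono sum_mono) auto
  also have "\<dots> = 34 * T * ((\<Sum>n\<in>{n. 1 \<le> n \<and> real n \<le> x}. real (dtilde P n) * (cmod (c n))^2)
      * (\<Sum>xs\<in>tuples Qs k. fact k * prod_list (map (\<lambda>q. 2 * vq q * A q) xs)))"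
    unfolding I_def by (rule arg_cong[where f = "(*) (34 * T)"], rule sum_cartesian_product_mult)
  also have "(\<Sum>xs\<in>tuples Qs k. fact k * prod_list (map (\<lambda>q. 2 * vq q * A q) xs))
      = fact k * (\<Sum>q\<in>Qs. 2 * vq q * A q) ^ k"
    by (simp add: power_sum_eq_sum_tuples[OF Qs(1)] sum_distrib_left)
  finally show ?thesis
    using T0 by (simp add: divide_simps A_def sum_distrib_left mult_ac)
qed

text \<open>The case \<open>x = 1\<close>, \<open>c = 1\<close> of the previous argument, where the only pairs with equal products
  are \<open>(1, xs)\<close>, \<open>(1, ys)\<close> with \<open>\<Prod>xs = \<Prod>ys\<close>, so that no divisor function appears.\<close>
theorem integral_Qpoly_power_le:
  fixes a :: "nat \<Rightarrow> complex"
  assumes Qs: "finite Qs" "\<forall>q\<in>Qs. prime_or_prime_square q" and T: "real (Max Qs) ^ k < T"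
  shows "(1/T) * integral {T..2*T} (\<lambda>t. (cmod (Qpoly Qs a t))^(2*k))
    \<le> 34 * fact k * (\<Sum>q\<in>Qs. vq q * (cmod (a q))^2 / real q)^k"
proof -
  define R where "R xs = real (prod_count Qs k (prod_list xs))" for xs
  define A where "A q = (cmod (a q))^2 / real q" for q
  have Qs0: "0 \<notin> Qs" using Qs(2) prime_or_prime_square_pos by blast
  have "0 \<le> real (Max Qs) ^ k" by simp
  with T have T0: "0 < T" by linarith
  have one: "{n::nat. 1 \<le> n \<and> real n \<le> 1} = {1}" by auto
  have pairs: "{1::nat} \<times> tuples Qs k = Pair 1 ` tuples Qs k" by auto
  have weight: "(\<Sum>i\<in>{i\<in>{1} \<times> tuples Qs k. fst i * prod_list (snd i) = 1 * prod_list xs}. 1 / R (snd i)) = 1"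
    if xs: "xs \<in> tuples Qs k" for xs
  proof -
    have "{i\<in>{1::nat} \<times> tuples Qs k. fst i * prod_list (snd i) = 1 * prod_list xs}
        = Pair 1 ` {ys\<in>tuples Qs k. prod_list ys = prod_list xs}" by auto
    then show ?thesis
      using prod_count_prod_list_pos[OF Qs(1) xs] by (simp add: sum.reindex inj_on_def R_def prod_count_def)
  qed
  have "Dpoly 1 (\<lambda>_. 1) t = 1" for t unfolding Dpoly_def one by simp
  then have "integral {T..2*T} (\<lambda>t. (cmod (Qpoly Qs a t))^(2*k))
      = integral {T..2*T} (\<lambda>t. (cmod (Dpoly 1 (\<lambda>_. 1) t))^2 * (cmod (Qpoly Qs a t))^(2*k))" by simp
  also have "\<dots> \<le> 34 * T * (\<Sum>j\<in>{1} \<times> tuples Qs k. prod_list (map A (snd j)) * R (snd j)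
      * (\<Sum>i\<in>{i\<in>{1} \<times> tuples Qs k. fst i * prod_list (snd i) = fst j * prod_list (snd j)}. 1 / R (snd i)))"
    using integral_Dpoly_Qpoly_power_le[OF Qs(1) Qs0 _ , of 1 k T "\<lambda>_. 1" a] T
    unfolding one R_def A_def by simp
  also have "\<dots> = 34 * T * (\<Sum>xs\<in>tuples Qs k. prod_list (map A xs) * R xs)"
  proof -
    have "(\<Sum>j\<in>{1} \<times> tuples Qs k. G j) = (\<Sum>xs\<in>tuples Qs k. G (1, xs))" for G :: "nat \<times> nat list \<Rightarrow> real"
      unfolding pairs by (simp add: sum.reindex inj_on_def)
    then show ?thesis using weight by simp
  qed
  also have "\<dots> \<le> 34 * T * (\<Sum>xs\<in>tuples Qs k. fact k * prod_list (map (\<lambda>q. vq q * A q) xs))"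
  proof (intro mult_left_mono sum_mono)
    fix xs assume xs: "xs \<in> tuples Qs k"
    have "prod_list (map A xs) * R xs \<le> prod_list (map A xs) * (fact k * prod_list (map vq xs))"
      unfolding R_def using prod_count_prod_list_le_vq[OF Qs xs]
      by (intro mult_left_mono prod_list_nonneg) (auto simp: A_def)
    then show "prod_list (map A xs) * R xs \<le> fact k * prod_list (map (\<lambda>q. vq q * A q) xs)"
      by (simp add: prod_list_map_mult[symmetric] ac_simps)
  qed (use T0 in simp)
  also have "\<dots> = 34 * T * (fact k * (\<Sum>q\<in>Qs. vq q * A q) ^ k)"
    by (simp add: power_sum_eq_sum_tuples[OF Qs(1)] sum_distrib_left)
  finally show ?thesis
    using T0 by (simp add: divide_simps A_def mult_ac)
qed

lemma primes_and_prime_squaresD: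
  assumes "finite P" "\<forall>p\<in>P. prime p" "Qs \<subseteq> P \<union> {p^2 | p. p \<in> P}"
  shows "finite Qs" "\<forall>q\<in>Qs. prime_or_prime_square q" "\<forall>q\<in>Qs. \<forall>r. prime r \<and> r dvd q \<longrightarrow> r \<in> P"
proof -
  have "Qs \<subseteq> P \<union> (\<lambda>p. p^2) ` P" using assms(3) by auto
  then show "finite Qs" by (rule finite_subset) (use assms(1) in simp)
  show "\<forall>q\<in>Qs. prime_or_prime_square q"
    using assms(2,3) unfolding prime_or_prime_square_def by auto
  show "\<forall>q\<in>Qs. \<forall>r. prime r \<and> r dvd q \<longrightarrow> r \<in> P"
  proof (intro ballI allI impI)
    fix q r assume q: "q \<in> Qs" and r: "prime r \<and> r dvd q"
    obtain p where p: "p \<in> P" "q = p \<or> q = p^2" using q assms(3) by auto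
    then have "r dvd p" using r prime_dvd_power_nat[of r p 2] by auto
    then have "r = p" using r p(1) assms(2) primes_dvd_imp_eq by auto
    then show "r \<in> P" using p(1) by simp
  qed
qed

theorem lemma2:
  shows "\<exists>C T0. C > 0 \<and> (\<forall>T x c P Qs a k.
     T \<ge> T0 \<and> x \<ge> 1 \<and> finite P \<and> (\<forall>p\<in>P. prime p) \<and>
     Qs \<noteq> {} \<and> Qs \<subseteq> P \<union> {p^2 | p. p \<in> P} \<longrightarrow>
     (x * real (Max Qs) ^ k < T \<longrightarrow>
        (1/T) * integral {T..2*T} (\<lambda>t. (cmod (Dpoly x c t))^2 * (cmod (Qpoly Qs a t))^(2*k))
        \<le> C * (\<Sum>n\<in>{n. 1 \<le> n \<and> real n \<le> x}. real (dtilde P n) * (cmod (c n))^2)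
            * fact k * (2 * (\<Sum>q\<in>Qs. vq q * (cmod (a q))^2 / real q))^k) \<and>
     (real (Max Qs) ^ k < T \<longrightarrow>
        (1/T) * integral {T..2*T} (\<lambda>t. (cmod (Qpoly Qs a t))^(2*k))
        \<le> C * fact k * (\<Sum>q\<in>Qs. vq q * (cmod (a q))^2 / real q)^k))"
proof (rule exI[of _ "34::real"], rule exI[of _ "0::real"], intro conjI allI impI)
  fix T x :: real and c a :: "nat \<Rightarrow> complex" and P Qs :: "nat set" and k :: nat
  assume H: "0 \<le> T \<and> 1 \<le> x \<and> finite P \<and> (\<forall>p\<in>P. prime p) \<and> Qs \<noteq> {} \<and> Qs \<subseteq> P \<union> {p^2 | p. p \<in> P}"
    and T: "x * real (Max Qs) ^ k < T"
  show "(1/T) * integral {T..2*T} (\<lambda>t. (cmod (Dpoly x c t))^2 * (cmod (Qpoly Qs a t))^(2*k))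
      \<le> 34 * (\<Sum>n\<in>{n. 1 \<le> n \<and> real n \<le> x}. real (dtilde P n) * (cmod (c n))^2)
        * fact k * (2 * (\<Sum>q\<in>Qs. vq q * (cmod (a q))^2 / real q))^k"
    using integral_Dpoly_Qpoly_power_le_dtilde[OF primes_and_prime_squaresD[of P Qs] _ T] H by blast
next
  fix T x :: real and c a :: "nat \<Rightarrow> complex" and P Qs :: "nat set" and k :: nat
  assume H: "0 \<le> T \<and> 1 \<le> x \<and> finite P \<and> (\<forall>p\<in>P. prime p) \<and> Qs \<noteq> {} \<and> Qs \<subseteq> P \<union> {p^2 | p. p \<in> P}"
    and T: "real (Max Qs) ^ k < T"
  show "(1/T) * integral {T..2*T} (\<lambda>t. (cmod (Qpoly Qs a t))^(2*k))
      \<le> 34 * fact k * (\<Sum>q\<in>Qs. vq q * (cmod (a q))^2 / real q)^k"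
    using integral_Qpoly_power_le[OF primes_and_prime_squaresD(1,2)[of P Qs] T] H by blast
qed simp

end
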